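(* Let $\alpha$ be a composition and $n\ge1$. If $\alpha<_c\beta$ and $\beta/\!\!/\alpha$ is an nc border strip with $n$ boxes, then there exists $w\in CRHW_n$ with $w(\alpha)=\beta$.
   Context: A composition is a finite sequence $\alpha=(\alpha_1,\dots,\alpha_k)$ of positive integers; $\ell(\alpha)=k$. Its diagram is the set of boxes $(i,j)$, $1\le i\le\ell(\alpha)$, $1\le j\le\alpha_i$, rows numbered top to bottom, columns left to right. For compositions $\gamma=(\gamma_1,\dots,\gamma_l)$, $\delta$ write $\gamma\lessdot_c\delta$ if $\delta=(1,\gamma_1,\dots,\gamma_l)$ or $\delta=(\gamma_1,\dots,\gamma_k+1,\dots,\gamma_l)$ for some $k$ with $\gamma_i\neq\gamma_k$ for all $i<k$; $<_c$ is the transitive closure. For $\gamma<_c\delta$, $\delta/\!\!/\gamma$ is the set of boxes of $\delta$ not in the inner shape, the inner shape being the boxes $(\ell(\delta)-\ell(\gamma)+i,j)$, $1\le i\le\ell(\gamma)$, $1\le j\le\gamma_i$. $\mathrm{supp}(\beta/\!\!/\alpha)$ is the set of columns containing a box of $\beta/\!\!/\alpha$; $\beta/\!\!/\alpha$ is an interval shape if this set is a set of consecutive integers. An interval shape is an nc border strip if (1) whenever $(i,1),(i,2)\in\beta/\!\!/\alpha$, the box $(i,1)$ is the bottommost box of column 1 of $\beta/\!\!/\alpha$, and (2) whenever $(i,j),(i,j+1)\in\beta/\!\!/\alpha$ with $j\ge2$, the box $(i,j)$ is the topmost box of column $j$ of $\beta/\!\!/\alpha$. Box-adding operators: $\mathfrak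 t_1(\alpha)=(1,\alpha_1,\dots,\alpha_k)$; for $i\ge2$, $\mathfrak t_i(\alpha)$ increases the leftmost part of $\alpha$ equal to $i-1$ by $1$, and is $0$ if there is no such part; $\mathfrak t_i(0)=0$. A word $w=\mathfrak t_{i_1}\cdots\mathfrak t_{i_n}$ acts by $w(\alpha)=\mathfrak t_{i_1}(\cdots\mathfrak t_{i_n}(\alpha))$. It is a reverse hookword if $i_1\le\cdots\le i_{k+1}>i_{k+2}>\cdots>i_n$ for some $0\le k\le n-1$, connected if $\{i_1,\dots,i_n\}$ is a set of consecutive integers; $CRHW_n$ is the set of connected reverse hookwords of length $n$. *)

theory Defs
  imports Main
begin

(* Compositions are lists of positive naturals; boxes are pairs (row, column), 1-indexed. *)
type_synonym comp = "nat list"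

definition is_comp :: "comp \<Rightarrow> bool" where
  "is_comp \<alpha> \<longleftrightarrow> (\<forall>x\<in>set \<alpha>. 0 < x)"

definition ccover :: "comp \<Rightarrow> comp \<Rightarrow> bool" where
  "ccover \<gamma> \<delta> \<longleftrightarrow> \<delta> = 1 # \<gamma> \<or>
     (\<exists>k < length \<gamma>. \<delta> = \<gamma>[k := \<gamma> ! k + 1] \<and> (\<forall>i < k. \<gamma> ! i \<noteq> \<gamma> ! k))"

definition clt :: "comp \<Rightarrow> comp \<Rightarrow> bool" where
  "clt = tranclp ccover"

definition diagram :: "comp \<Rightarrow> (nat \<times> nat) set" where
  "diagram \<delta> = {(i, j). 1 \<le> i \<and> i \<le> length \<delta> \<and> 1 \<le> j \<and> j \<le> \<delta> ! (i - 1)}"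

(* inner shape of gamma inside delta (bottom-justified) *)
definition inner_shape :: "comp \<Rightarrow> comp \<Rightarrow> (nat \<times> nat) set" where
  "inner_shape \<gamma> \<delta> = {(length \<delta> - length \<gamma> + i, j) | i j.
      1 \<le> i \<and> i \<le> length \<gamma> \<and> 1 \<le> j \<and> j \<le> \<gamma> ! (i - 1)}"

definition skew :: "comp \<Rightarrow> comp \<Rightarrow> (nat \<times> nat) set" where
  "skew \<delta> \<gamma> = diagram \<delta> - inner_shape \<gamma> \<delta>"

definition supp :: "(nat \<times> nat) set \<Rightarrow> nat set" where
  "supp S = snd ` S"

definition interval_shape :: "(nat \<times> nat) set \<Rightarrow> bool" where
  "interval_shape S \<longleftrightarrow>
     (\<forall>x y z. x \<in> supp S \<and> z \<in> supp S \<and> x \<le> y \<and> y \<le> z \<longrightarrow> y \<in> supp S)"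

(* rows numbered top to bottom: bottommost = largest row index, topmost = smallest *)
definition nc_border_strip :: "(nat \<times> nat) set \<Rightarrow> bool" where
  "nc_border_strip S \<longleftrightarrow> interval_shape S \<and>
     (\<forall>i. (i, 1) \<in> S \<and> (i, 2) \<in> S \<longrightarrow> i = Max {r. (r, 1) \<in> S}) \<and>
     (\<forall>i j. 2 \<le> j \<and> (i, j) \<in> S \<and> (i, j + 1) \<in> S \<longrightarrow> i = Min {r. (r, j) \<in> S})"

(* box-adding operators; None plays the role of 0 *)
definition box_add :: "nat \<Rightarrow> comp \<Rightarrow> comp option" where
  "box_add i \<alpha> = (if i = 1 then Some (1 # \<alpha>)
     else if 2 \<le> i \<and> (i - 1) \<in> set \<alpha> then
       (let k = (LEAST k. k < length \<alpha> \<and> \<alpha> ! k = i - 1) in Some (\<alpha>[k := \<alpha> ! k + 1]))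
     else None)"

(* w = t_{i_1} ... t_{i_n} acts by w(alpha) = t_{i_1}(... t_{i_n}(alpha)) *)
definition word_act :: "nat list \<Rightarrow> comp \<Rightarrow> comp option" where
  "word_act w \<alpha> = foldr (\<lambda>i x. Option.bind x (box_add i)) w (Some \<alpha>)"

definition reverse_hookword :: "nat list \<Rightarrow> bool" where
  "reverse_hookword w \<longleftrightarrow> (\<exists>k < length w.
      (\<forall>j. j < k \<longrightarrow> w ! j \<le> w ! (j + 1)) \<and>
      (\<forall>j. k \<le> j \<and> j + 1 < length w \<longrightarrow> w ! j > w ! (j + 1)))"

definition connected_word :: "nat list \<Rightarrow> bool" where
  "connected_word w \<longleftrightarrow> (\<exists>a b. set w = {a..b})"

definition CRHW :: "nat \<Rightarrow> nat list set" where
  "CRHW n = {w. length w = n \<and> (\<forall>i\<in>set w. 1 \<le> i) \<and> reverse_hookword w \<and> connected_word w}"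

end

theory Submission
  imports Defs
begin

(* Since alpha <_c beta, alpha sits bottom-justified in beta, the new rows on top are
   nonempty, and each cover lengthens the leftmost part of its size (embeds_below).
   Condition (1) of an nc border strip makes all new rows but the lowest one single
   boxes; they are produced by letters 1, and removing them leaves compositions a0, b0
   of equal length (locale nc_strip).  Condition (2) says that a row continuing past a
   column j >= 2 is the topmost row of the strip in column j.  For such a0, b0 the core
   construction (locale strip_core) sweeps the columns upwards, filling each growing row
   to one box short of its final length (the topmost longest row completely), and then
   downwards, adding the missing last boxes; every column is one block of equal letters,
   which land in the right rows because a letter always lengthens the leftmost part of
   its size.  The resulting word  1..1 (downward sweep) (upward sweep) [1]  in word
   order is a reverse hookword whose letters are exactly the columns of the strip. *)

section \<open>Acting with letters in order of application\<close>

(* run xs g applies the letters of xs to g from left to right; a word acts by running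
   its reversal. *)
fun run :: "nat list \<Rightarrow> comp \<Rightarrow> comp option" where
  "run [] g = Some g"
| "run (x # xs) g = Option.bind (box_add x g) (run xs)"

lemma run_Nil_eq_Some [simp]: "run [] = Some"
  by (rule ext) simp

lemma run_append: "run (xs @ ys) g = Option.bind (run xs g) (run ys)"
proof (induction xs arbitrary: g)
  case (Cons a xs) then show ?case by (cases "box_add a g") auto
qed simp

lemma word_act_run: "word_act w \<alpha> = run (rev w) \<alpha>"
proof (induction w arbitrary: \<alpha>)
  case Nil then show ?case by (simp add: word_act_def)
next
  case (Cons x w)
  have "word_act (x # w) \<alpha> = Option.bind (word_act w \<alpha>) (box_add x)"
    by (simp add: word_act_def)
  also have "\<dots> = run (rev (x # w)) \<alpha>"
    using Cons by (cases "run (rev w) \<alpha>") (auto simp: run_append bind_eq_Some_conv)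
  finally show ?case .
qed

lemma run_ones: "run (replicate k 1) g = Some (replicate k 1 @ g)"
  by (induction k arbitrary: g) (auto simp: box_add_def replicate_app_Cons_same)

lemma box_add_size: "box_add x g = Some h \<Longrightarrow> sum_list h = sum_list g + 1"
proof (cases "x = 1")
  case False
  assume h: "box_add x g = Some h"
  then have x: "2 \<le> x" "x - 1 \<in> set g" using False by (auto simp: box_add_def split: if_splits)
  define k where "k = (LEAST k. k < length g \<and> g ! k = x - 1)"
  have "\<exists>k. k < length g \<and> g ! k = x - 1" using x by (auto simp: in_set_conv_nth)
  then have k: "k < length g" unfolding k_def by (metis (mono_tags, lifting) LeastI_ex)
  have "h = g[k := g ! k + 1]" using h x False by (auto simp: box_add_def k_def Let_def)
  then show ?thesis using k by (simp add: sum_list_update)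
qed (auto simp: box_add_def)

lemma run_size: "run xs g = Some g' \<Longrightarrow> sum_list g' = sum_list g + length xs"
proof (induction xs arbitrary: g)
  case (Cons x xs)
  then obtain h where h: "box_add x g = Some h" "run xs h = Some g'"
    by (cases "box_add x g") auto
  show ?case using Cons.IH[OF h(2)] box_add_size[OF h(1)] by simp
qed simp

section \<open>Filling one column with a block of equal letters\<close>

definition column_step :: "nat \<Rightarrow> comp \<Rightarrow> comp \<Rightarrow> bool" where
  "column_step j g g' \<longleftrightarrow> length g' = length g \<and>
     (\<forall>r<length g. g' ! r = g ! r \<or> (g ! r = j - 1 \<and> g' ! r = j)) \<and>
     (\<forall>r r'. r < length g \<longrightarrow> r' < r \<longrightarrow> g' ! r \<noteq> g ! r \<longrightarrow> g ! r' = j - 1 \<longrightarrow> g' ! r' \<noteq> g ! r')"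

definition changed :: "comp \<Rightarrow> comp \<Rightarrow> nat" where
  "changed g g' = card {r. r < length g \<and> g' ! r \<noteq> g ! r}"

(* Such a step is realised by as many letters j as parts change: each letter j hits the
   leftmost remaining part j - 1, which is the leftmost part still to be changed. *)
lemma run_column_step:
  assumes "2 \<le> j" "column_step j g g'"
  shows "run (replicate (changed g g') j) g = Some g'"
  using assms(2)
proof (induction "changed g g'" arbitrary: g)
  case 0
  have "{r. r < length g \<and> g' ! r \<noteq> g ! r} = {}" using 0 unfolding changed_def by simp
  then have "g' = g" using 0(2) unfolding column_step_def by (auto intro: nth_equalityI)
  then show ?case using 0(1) by simp
next
  case (Suc k)
  let ?C = "{r. r < length g \<and> g' ! r \<noteq> g ! r}"
  have "?C \<noteq> {}" using Suc(2) unfolding changed_def by (metis card.empty nat.distinct(1))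
  define r0 where "r0 = (LEAST r. r < length g \<and> g' ! r \<noteq> g ! r)"
  have r0: "r0 < length g" "g' ! r0 \<noteq> g ! r0"
    using \<open>?C \<noteq> {}\<close> LeastI_ex[of "\<lambda>r. r < length g \<and> g' ! r \<noteq> g ! r"] unfolding r0_def by auto
  have before_r0: "\<And>r. r < r0 \<Longrightarrow> g' ! r = g ! r" using not_less_Least r0 unfolding r0_def
    by (metis (mono_tags, lifting) order.strict_trans)
  have g_r0: "g ! r0 = j - 1" "g' ! r0 = j" using Suc(3) r0 unfolding column_step_def by auto
  have leftmost: "(LEAST k. k < length g \<and> g ! k = j - 1) = r0"
  proof (rule Least_equality)
    show "r0 < length g \<and> g ! r0 = j - 1" using r0 g_r0 by simp
  next
    fix y assume y: "y < length g \<and> g ! y = j - 1"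
    show "r0 \<le> y"
    proof (rule ccontr)
      assume "\<not> r0 \<le> y"
      then have "g' ! y \<noteq> g ! y" using Suc(3) y r0 unfolding column_step_def by auto
      then show False using before_r0 \<open>\<not> r0 \<le> y\<close> by simp
    qed
  qed
  define g1 where "g1 = g[r0 := j]"
  have "j - 1 \<in> set g" using r0 g_r0 by (metis nth_mem)
  then have first: "box_add j g = Some g1"
    using assms(1) leftmost g_r0 unfolding box_add_def g1_def by (simp add: Let_def)
  have "{r. r < length g1 \<and> g' ! r \<noteq> g1 ! r} = ?C - {r0}"
    using g_r0 r0 by (auto simp: g1_def nth_list_update)
  then have "changed g1 g' = k" using Suc(2) r0 unfolding changed_def by simp
  moreover have "column_step j g1 g'"
    using Suc(3) g_r0 r0 unfolding column_step_def g1_def by (auto simp: nth_list_update)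
  ultimately have "run (replicate k j) g1 = Some g'" using Suc(1) by metis
  then show ?case using first Suc(2)[symmetric] by simp
qed

definition blocks :: "(nat \<Rightarrow> nat) \<Rightarrow> nat list \<Rightarrow> nat list" where
  "blocks f js = concat (map (\<lambda>j. replicate (f j) j) js)"

lemma set_blocks: "set (blocks f js) = {j \<in> set js. 0 < f j}"
  unfolding blocks_def by auto

lemma blocks_single: "(\<forall>j\<in>set js. f j \<le> 1) \<Longrightarrow> blocks f js = filter (\<lambda>j. f j = 1) js"
proof (induction js)
  case (Cons a js)
  then have "f a = 0 \<or> f a = 1" by auto
  then show ?case using Cons by (auto simp: blocks_def)
qed (simp add: blocks_def)

lemma blocks_antisorted: "sorted_wrt (\<ge>) js \<Longrightarrow> sorted_wrt (\<ge>) (blocks f (js :: nat list))"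
proof (induction js)
  case (Cons a js)
  have "sorted_wrt (\<ge>) (replicate k a)" for k by (induction k) auto
  then show ?case using Cons by (auto simp: blocks_def sorted_wrt_append)
qed (simp add: blocks_def)

section \<open>Reverse hookwords\<close>

lemma reverse_hookword_append:
  assumes "sorted A" "sorted_wrt (>) B" "B \<noteq> []" "\<forall>x\<in>set A. x \<le> hd B"
  shows "reverse_hookword (A @ B)"
  unfolding reverse_hookword_def
proof (intro exI[of _ "length A"] conjI allI impI)
  show "length A < length (A @ B)" using assms(3) by simp
next
  fix j assume j: "j < length A"
  show "(A @ B) ! j \<le> (A @ B) ! (j + 1)"
  proof (cases "j + 1 < length A")
    case True then show ?thesis using assms(1) j by (simp add: nth_append sorted_iff_nth_mono)
  next
    case False
    then have "j + 1 = length A" using j by simp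
    then show ?thesis using assms(3,4) j by (simp add: nth_append hd_conv_nth)
  qed
next
  fix j assume j: "length A \<le> j \<and> j + 1 < length (A @ B)"
  then have "B ! (j - length A + 1) < B ! (j - length A)"
    using assms(2) unfolding sorted_wrt_iff_nth_less by auto
  then show "(A @ B) ! (j + 1) < (A @ B) ! j" using j by (simp add: nth_append Suc_diff_le)
qed

section \<open>The core construction between two compositions of equal length\<close>

locale strip_core =
  fixes a0 b0 :: comp
  assumes same_length: "length b0 = length a0"
    and a0_pos: "\<And>r. r < length a0 \<Longrightarrow> 1 \<le> a0 ! r"
    and a0_le_b0: "\<And>r. r < length a0 \<Longrightarrow> a0 ! r \<le> b0 ! r"
    and some_growth: "\<exists>r<length a0. a0 ! r < b0 ! r"
    and no_box_above: "\<And>r j r'. r < length a0 \<Longrightarrow> a0 ! r < j \<Longrightarrow> j + 1 \<le> b0 ! r \<Longrightarrow> r' < r \<Longrightarrow>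
                          \<not> (a0 ! r' < j \<and> j \<le> b0 ! r')"
    and leftmost_order: "\<And>r r'. r < length a0 \<Longrightarrow> r' < r \<Longrightarrow> a0 ! r' = b0 ! r' \<Longrightarrow>
                          a0 ! r \<le> a0 ! r' \<Longrightarrow> b0 ! r \<le> b0 ! r'"
begin

definition grows :: "nat \<Rightarrow> bool" where
  "grows r \<longleftrightarrow> r < length a0 \<and> a0 ! r < b0 ! r"

definition peak :: nat where
  "peak = Max ((\<lambda>r. b0 ! r) ` {r. grows r})"

definition top_row :: nat where
  "top_row = (LEAST r. grows r \<and> b0 ! r = peak)"

(* the length row r reaches in the upward sweep: one box short of its final length,
   except for the top row, which is completed *)
definition stop :: "nat \<Rightarrow> nat" where
  "stop r = (if grows r \<and> r \<noteq> top_row then b0 ! r - 1 else b0 ! r)"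

definition up_stage :: "nat \<Rightarrow> comp" where
  "up_stage j = map (\<lambda>r. max (a0 ! r) (min (stop r) j)) [0..<length a0]"

definition down_stage :: "nat \<Rightarrow> comp" where
  "down_stage j = map (\<lambda>r. if j \<le> b0 ! r then b0 ! r else stop r) [0..<length a0]"

definition up_count :: "nat \<Rightarrow> nat" where
  "up_count j = changed (up_stage (j - 1)) (up_stage j)"

definition down_count :: "nat \<Rightarrow> nat" where
  "down_count j = changed (down_stage (Suc j)) (down_stage j)"

definition up_word :: "nat list" where
  "up_word = blocks up_count [2..<Suc peak]"

definition down_word :: "nat list" where
  "down_word = blocks down_count (rev [2..<Suc peak])"

lemma finite_grows: "finite {r. grows r}"
  unfolding grows_def by simp

lemma peak_ge: "grows r \<Longrightarrow> b0 ! r \<le> peak"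
  unfolding peak_def using finite_grows by (intro Max_ge) auto

lemma peak_attained: "\<exists>r. grows r \<and> b0 ! r = peak"
proof -
  have "{r. grows r} \<noteq> {}" using some_growth unfolding grows_def by auto
  then have "peak \<in> (\<lambda>r. b0 ! r) ` {r. grows r}"
    unfolding peak_def using finite_grows by (intro Max_in) auto
  then show ?thesis by auto
qed

lemma top_row: "grows top_row" "b0 ! top_row = peak"
  using LeastI_ex[OF peak_attained] unfolding top_row_def by auto

lemma top_row_least: "grows r \<Longrightarrow> b0 ! r = peak \<Longrightarrow> top_row \<le> r"
  unfolding top_row_def by (rule Least_le) simp

(* growing rows start with at least one box, so the peak lies beyond column 1 *)
lemma peak_ge_2: "2 \<le> peak"
  using top_row a0_pos unfolding grows_def by fastforce

lemma stop_ge: "r < length a0 \<Longrightarrow> a0 ! r \<le> stop r"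
  using a0_le_b0 unfolding stop_def grows_def by auto

lemma stop_le: "stop r \<le> b0 ! r"
  unfolding stop_def by auto

lemma stop_static: "r < length a0 \<Longrightarrow> \<not> grows r \<Longrightarrow> stop r = a0 ! r \<and> b0 ! r = a0 ! r"
  using a0_le_b0 unfolding stop_def grows_def by (auto simp: not_less intro: antisym)

lemma stop_le_peak: "grows r \<Longrightarrow> stop r \<le> peak"
  using stop_le peak_ge order.trans by blast

lemma stop_top_row: "stop top_row = peak"
  using top_row unfolding stop_def by simp

lemma stop_growing: "grows r \<Longrightarrow> r \<noteq> top_row \<Longrightarrow> stop r = b0 ! r - 1"
  unfolding stop_def by simp

lemma grows_if_stop: "r < length a0 \<Longrightarrow> a0 ! r < stop r \<Longrightarrow> grows r"
  using stop_static by fastforce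

lemma up_box_topmost:
  assumes r: "r < length a0" and j: "a0 ! r < j" "j \<le> stop r" and r': "r' < r"
  shows "\<not> (a0 ! r' < j \<and> j \<le> b0 ! r')"
proof
  assume h: "a0 ! r' < j \<and> j \<le> b0 ! r'"
  have "grows r" using grows_if_stop r j by simp
  show False
  proof (cases "j + 1 \<le> b0 ! r")
    case True
    then show False using no_box_above[OF r j(1) _ r'] h by blast
  next
    case False
    then have "j = b0 ! r" using j stop_le[of r] by linarith
    have "r = top_row"
    proof (rule ccontr)
      assume "r \<noteq> top_row"
      then show False using stop_growing[OF \<open>grows r\<close>] j \<open>j = b0 ! r\<close> by linarith
    qed
    then have "j = peak" using top_row \<open>j = b0 ! r\<close> by simp
    have "grows r'" using h r r' unfolding grows_def by auto
    then have "b0 ! r' = peak" using peak_ge h \<open>j = peak\<close> by (metis antisym)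
    then show False using top_row_least \<open>grows r'\<close> r' \<open>r = top_row\<close> by fastforce
  qed
qed

lemma up_stage_nth: "r < length a0 \<Longrightarrow> up_stage j ! r = max (a0 ! r) (min (stop r) j)"
  unfolding up_stage_def by simp

lemma down_stage_nth: "r < length a0 \<Longrightarrow> down_stage j ! r = (if j \<le> b0 ! r then b0 ! r else stop r)"
  unfolding down_stage_def by simp

lemma up_stage_length [simp]: "length (up_stage j) = length a0"
  unfolding up_stage_def by simp

lemma down_stage_length [simp]: "length (down_stage j) = length a0"
  unfolding down_stage_def by simp

lemma up_changes: "2 \<le> j \<Longrightarrow> {r. r < length (up_stage (j - 1)) \<and> up_stage j ! r \<noteq> up_stage (j - 1) ! r}
   = {r. r < length a0 \<and> a0 ! r < j \<and> j \<le> stop r}"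
  using stop_ge by (auto simp: up_stage_nth)

lemma down_change_iff:
  assumes "r < length a0"
  shows "down_stage j ! r \<noteq> down_stage (Suc j) ! r \<longleftrightarrow> grows r \<and> r \<noteq> top_row \<and> b0 ! r = j"
proof (cases "grows r \<and> r \<noteq> top_row")
  case True
  then have "stop r = b0 ! r - 1" "a0 ! r < b0 ! r" using stop_growing unfolding grows_def by auto
  then show ?thesis using True assms by (auto simp: down_stage_nth)
next
  case False
  then have "stop r = b0 ! r" unfolding stop_def by auto
  then show ?thesis using False assms by (auto simp: down_stage_nth)
qed

lemma down_changes: "{r. r < length (down_stage (Suc j)) \<and> down_stage j ! r \<noteq> down_stage (Suc j) ! r}
   = {r. grows r \<and> r \<noteq> top_row \<and> b0 ! r = j}"
  using down_change_iff by (auto simp: grows_def)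

lemma up_column_step:
  assumes j: "2 \<le> j" "j \<le> peak"
  shows "column_step j (up_stage (j - 1)) (up_stage j)"
  unfolding column_step_def
proof (intro conjI allI impI)
  fix r assume "r < length (up_stage (j - 1))"
  then show "up_stage j ! r = up_stage (j - 1) ! r \<or> up_stage (j - 1) ! r = j - 1 \<and> up_stage j ! r = j"
    using stop_ge[of r] j by (auto simp: up_stage_nth)
next
  fix r r' assume r: "r < length (up_stage (j - 1))" and r': "r' < r"
    and moved: "up_stage j ! r \<noteq> up_stage (j - 1) ! r" and prev: "up_stage (j - 1) ! r' = j - 1"
  have rl: "r < length a0" "r' < length a0" using r r' by auto
  have rj: "a0 ! r < j" "j \<le> stop r" using moved stop_ge[of r] rl by (auto simp: up_stage_nth)
  show "up_stage j ! r' \<noteq> up_stage (j - 1) ! r'"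
  proof
    assume "up_stage j ! r' = up_stage (j - 1) ! r'"
    then have stop_r': "stop r' = j - 1" "a0 ! r' \<le> j - 1"
      using prev stop_ge[of r'] rl j by (auto simp: up_stage_nth)
    show False
    proof (cases "grows r'")
      case False
      then have "a0 ! r' = j - 1" "b0 ! r' = j - 1" using stop_static rl stop_r' by auto
      then have "b0 ! r \<le> j - 1" using leftmost_order[OF rl(1) r'] rj by simp
      then show False using rj stop_le[of r] j by linarith
    next
      case True
      show False
      proof (cases "r' = top_row")
        case False
        then have "b0 ! r' = j" using stop_growing[OF True] stop_r' True j unfolding grows_def by auto
        then show False using up_box_topmost[OF rl(1) rj r'] True unfolding grows_def by auto
      next
        case True
        then have "peak = j - 1" using stop_top_row stop_r' by simp
        moreover have "stop r \<le> peak" using stop_le_peak grows_if_stop rl rj by auto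
        ultimately show False using rj j by linarith
      qed
    qed
  qed
qed simp

lemma down_column_step:
  assumes j: "2 \<le> j" "j \<le> peak"
  shows "column_step j (down_stage (Suc j)) (down_stage j)"
  unfolding column_step_def
proof (intro conjI allI impI)
  fix r assume "r < length (down_stage (Suc j))"
  then have rl: "r < length a0" by simp
  show "down_stage j ! r = down_stage (Suc j) ! r \<or> down_stage (Suc j) ! r = j - 1 \<and> down_stage j ! r = j"
  proof (cases "grows r \<and> r \<noteq> top_row")
    case True then show ?thesis using stop_growing[of r] rl by (auto simp: down_stage_nth)
  next
    case False then show ?thesis using rl stop_static[OF rl] by (auto simp: down_stage_nth stop_def)
  qed
next
  fix r r' assume r: "r < length (down_stage (Suc j))" and r': "r' < r"
    and moved: "down_stage j ! r \<noteq> down_stage (Suc j) ! r" and prev: "down_stage (Suc j) ! r' = j - 1"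
  have rl: "r < length a0" "r' < length a0" using r r' by auto
  have row_r: "grows r" "r \<noteq> top_row" "b0 ! r = j" using down_change_iff[OF rl(1)] moved by auto
  show "down_stage j ! r' \<noteq> down_stage (Suc j) ! r'"
  proof
    assume same: "down_stage j ! r' = down_stage (Suc j) ! r'"
    have short: "\<not> Suc j \<le> b0 ! r'" using prev j by (auto simp: down_stage_nth rl)
    have stop_r': "stop r' = j - 1" using prev short by (simp add: down_stage_nth rl)
    have "b0 ! r' \<noteq> j"
    proof
      assume "b0 ! r' = j"
      then have "stop r' = j" using same short by (simp add: down_stage_nth rl)
      then show False using stop_r' j by simp
    qed
    then have b0_r': "b0 ! r' = j - 1" using short stop_r' stop_le[of r'] by linarith
    show False
    proof (cases "grows r'")
      case False
      then have "a0 ! r' = b0 ! r'" using stop_static[OF rl(2)] by simp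
      moreover have "a0 ! r \<le> a0 ! r'" using calculation b0_r' row_r unfolding grows_def by linarith
      ultimately have "b0 ! r \<le> j - 1" using leftmost_order[OF rl(1) r'] b0_r' by simp
      then show False using row_r j by simp
    next
      case True
      show False
      proof (cases "r' = top_row")
        case False
        then show False using stop_growing True stop_r' b0_r' j by simp
      next
        case True
        then have "peak = j - 1" using top_row b0_r' by simp
        then show False using peak_ge[OF row_r(1)] row_r j by simp
      qed
    qed
  qed
qed simp

lemma up_stage_1: "up_stage 1 = a0"
  by (rule nth_equalityI) (auto simp: up_stage_nth dest: a0_pos)

lemma up_stage_peak: "up_stage peak = down_stage (Suc peak)"
proof (rule nth_equalityI)
  fix r assume "r < length (up_stage peak)"
  then have rl: "r < length a0" by simp
  show "up_stage peak ! r = down_stage (Suc peak) ! r"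
  proof (cases "grows r")
    case True
    then show ?thesis
      using peak_ge[OF True] stop_le_peak[OF True] stop_ge[OF rl] rl by (auto simp: up_stage_nth down_stage_nth)
  next
    case False
    then show ?thesis using stop_static[OF rl] rl by (auto simp: up_stage_nth down_stage_nth)
  qed
qed simp

lemma down_stage_2: "down_stage 2 = b0"
proof (rule nth_equalityI)
  fix r assume "r < length (down_stage 2)"
  then have rl: "r < length a0" by simp
  show "down_stage 2 ! r = b0 ! r"
  proof (cases "2 \<le> b0 ! r")
    case False
    then have "\<not> grows r" using a0_pos[OF rl] unfolding grows_def by auto
    then show ?thesis using stop_static[OF rl] rl False by (auto simp: down_stage_nth)
  qed (simp add: down_stage_nth rl)
qed (simp add: same_length)

lemma run_up_sweep:
  assumes "1 \<le> j" "j \<le> peak"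
  shows "run (blocks up_count [2..<Suc j]) a0 = Some (up_stage j)"
  using assms
proof (induction j rule: dec_induct)
  case base then show ?case using up_stage_1 by (simp add: blocks_def)
next
  case (step j)
  have "blocks up_count [2..<Suc (Suc j)] = blocks up_count [2..<Suc j] @ replicate (up_count (Suc j)) (Suc j)"
    using step.hyps by (simp add: blocks_def)
  then show ?case
    using step run_column_step[OF _ up_column_step[of "Suc j"]] unfolding up_count_def
    by (simp add: run_append)
qed

lemma run_down_sweep:
  assumes "2 \<le> j" "j \<le> Suc peak"
  shows "run (blocks down_count (rev [j..<Suc peak])) (down_stage (Suc peak)) = Some (down_stage j)"
  using assms(2,1)
proof (induction j rule: inc_induct)
  case base then show ?case by (simp add: blocks_def)
next
  case (step j)
  have "rev [j..<Suc peak] = rev [Suc j..<Suc peak] @ [j]" using step.hyps by (simp add: upt_conv_Cons)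
  then have "blocks down_count (rev [j..<Suc peak])
      = blocks down_count (rev [Suc j..<Suc peak]) @ replicate (down_count j) j"
    by (simp add: blocks_def)
  then show ?case
    using step run_column_step[OF _ down_column_step[of j]] unfolding down_count_def
    by (simp add: run_append)
qed

theorem run_core: "run (up_word @ down_word) a0 = Some b0"
  using run_up_sweep[of peak] run_down_sweep[of 2] peak_ge_2
  by (simp add: up_word_def down_word_def run_append up_stage_peak down_stage_2)

lemma up_count_eq: "2 \<le> j \<Longrightarrow> up_count j = card {r. r < length a0 \<and> a0 ! r < j \<and> j \<le> stop r}"
  unfolding up_count_def changed_def using up_changes by simp

lemma down_count_eq: "down_count j = card {r. grows r \<and> r \<noteq> top_row \<and> b0 ! r = j}"
  unfolding down_count_def changed_def using down_changes by simp

lemma up_count_le_1: "2 \<le> j \<Longrightarrow> up_count j \<le> 1"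
proof -
  assume j: "2 \<le> j"
  have "r1 = r2" if "r1 < length a0" "a0 ! r1 < j" "j \<le> stop r1"
    "r2 < length a0" "a0 ! r2 < j" "j \<le> stop r2" for r1 r2
    using up_box_topmost[of r1 j r2] up_box_topmost[of r2 j r1] that stop_le[of r1] stop_le[of r2]
    by (metis le_trans linorder_neqE_nat)
  then have "card {r. r < length a0 \<and> a0 ! r < j \<and> j \<le> stop r} \<le> Suc 0"
    by (subst card_le_Suc0_iff_eq) auto
  then show ?thesis using up_count_eq[OF j] by simp
qed

(* the top row receives the box in column peak, so up_word ends with peak *)
lemma up_count_peak: "up_count peak = 1"
proof -
  have "a0 ! top_row < peak" "top_row < length a0" using top_row unfolding grows_def by auto
  then have "top_row \<in> {r. r < length a0 \<and> a0 ! r < peak \<and> peak \<le> stop r}"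
    using stop_top_row by simp
  then have "0 < up_count peak" using up_count_eq peak_ge_2 by (auto simp: card_gt_0_iff)
  then show ?thesis using up_count_le_1 peak_ge_2 by (simp add: le_antisym)
qed

lemma up_word_filter: "up_word = filter (\<lambda>j. up_count j = 1) [2..<Suc peak]"
  unfolding up_word_def by (rule blocks_single) (use up_count_le_1 in auto)

lemma set_core_word: "set (up_word @ down_word) = {j. \<exists>r<length a0. a0 ! r < j \<and> j \<le> b0 ! r}"
proof (intro set_eqI iffI)
  fix j assume "j \<in> set (up_word @ down_word)"
  then consider "2 \<le> j" "0 < up_count j" | "0 < down_count j"
    unfolding up_word_def down_word_def set_append set_blocks set_rev by auto
  then show "j \<in> {j. \<exists>r<length a0. a0 ! r < j \<and> j \<le> b0 ! r}"
  proof cases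
    case 1
    then obtain r where "r < length a0" "a0 ! r < j" "j \<le> stop r"
      using up_count_eq by (metis (no_types, lifting) Collect_empty_eq card.empty less_irrefl)
    then show ?thesis using stop_le[of r] by auto
  next
    case 2
    then have "{r. grows r \<and> r \<noteq> top_row \<and> b0 ! r = j} \<noteq> {}" using down_count_eq by fastforce
    then show ?thesis unfolding grows_def by auto
  qed
next
  fix j assume "j \<in> {j. \<exists>r<length a0. a0 ! r < j \<and> j \<le> b0 ! r}"
  then obtain r where r: "r < length a0" "a0 ! r < j" "j \<le> b0 ! r" by auto
  have "grows r" using r unfolding grows_def by auto
  have j: "j \<in> {2..peak}" using r a0_pos[of r] peak_ge[OF \<open>grows r\<close>] by auto
  show "j \<in> set (up_word @ down_word)"
  proof (cases "j \<le> stop r")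
    case True
    then have "0 < up_count j" using up_count_eq j r by (auto simp: card_gt_0_iff)
    then show ?thesis unfolding up_word_def set_append set_blocks set_upt using j by auto
  next
    case False
    have "r \<noteq> top_row" using False r(3) stop_top_row top_row(2) by auto
    then have "b0 ! r = j" using False r(3) stop_growing[OF \<open>grows r\<close>] by linarith
    with \<open>r \<noteq> top_row\<close> \<open>grows r\<close> have "r \<in> {r. grows r \<and> r \<noteq> top_row \<and> b0 ! r = j}" by simp
    then have "0 < down_count j" unfolding down_count_eq
      by (subst card_gt_0_iff) (auto intro: finite_subset[OF _ finite_grows])
    then show ?thesis unfolding down_word_def set_append set_blocks set_rev set_upt using j by auto
  qed
qed

lemma core_letters_bounds: "x \<in> set (up_word @ down_word) \<Longrightarrow> 2 \<le> x \<and> x \<le> peak"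
  unfolding up_word_def down_word_def set_append set_blocks set_rev by auto

(* In word order (the reversed run) the core letters form a weakly increasing part
   followed by a strictly decreasing part starting at peak; the letters 1 for single-box
   rows can be added in front, and one more letter 1 at the end. *)
lemma core_reverse_hookword:
  assumes "l \<le> 1"
  shows "reverse_hookword (replicate k 1 @ rev down_word @ rev up_word @ replicate l 1)"
proof -
  have bounds_up: "\<And>x. x \<in> set up_word \<Longrightarrow> 2 \<le> x \<and> x \<le> peak"
    and bounds_down: "\<And>x. x \<in> set down_word \<Longrightarrow> 2 \<le> x \<and> x \<le> peak"
    using core_letters_bounds by auto
  have up_last: "up_word = filter (\<lambda>j. up_count j = 1) [2..<peak] @ [peak]"
  proof -
    have "[2..<Suc peak] = [2..<peak] @ [peak]" using peak_ge_2 by simp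
    then show ?thesis unfolding up_word_filter using up_count_peak by simp
  qed
  have "sorted_wrt (<) up_word"
    unfolding up_word_filter by (rule sorted_wrt_filter) (rule sorted_wrt_upt)
  then have "sorted_wrt (>) (rev up_word)" by (simp add: sorted_wrt_rev)
  moreover have "sorted_wrt (>) (replicate l (1::nat))" using assms by (cases l) auto
  moreover have "1 < x" if "x \<in> set up_word" for x using bounds_up that by fastforce
  ultimately have dec: "sorted_wrt (>) (rev up_word @ replicate l 1)"
    by (auto simp: sorted_wrt_append)
  have "sorted_wrt (\<ge>) (rev [2..<Suc peak])" by (simp add: sorted_wrt_rev del: upt_Suc)
  then have "sorted_wrt (\<ge>) down_word" unfolding down_word_def by (rule blocks_antisorted)
  then have "sorted (rev down_word)" by (simp add: sorted_wrt_rev)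
  then have inc: "sorted (replicate k 1 @ rev down_word)" using bounds_down by (fastforce simp: sorted_append)
  have "reverse_hookword ((replicate k 1 @ rev down_word) @ (rev up_word @ replicate l 1))"
    by (rule reverse_hookword_append[OF inc dec]) (use up_last bounds_down peak_ge_2 in auto)
  then show ?thesis by simp
qed

end

section \<open>Compositions below beta in the order <_c\<close>

definition embeds_below :: "comp \<Rightarrow> comp \<Rightarrow> bool" where
  "embeds_below \<alpha> \<delta> \<longleftrightarrow> length \<alpha> \<le> length \<delta> \<and>
     (\<forall>i<length \<alpha>. \<alpha> ! i \<le> \<delta> ! (length \<delta> - length \<alpha> + i)) \<and>
     (\<forall>i' i. i' < i \<longrightarrow> i < length \<alpha> \<longrightarrow> \<alpha> ! i \<le> \<alpha> ! i' \<longrightarrow>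
        \<delta> ! (length \<delta> - length \<alpha> + i) \<le> \<delta> ! (length \<delta> - length \<alpha> + i')) \<and>
     (\<forall>r < length \<delta> - length \<alpha>. 1 \<le> \<delta> ! r)"

lemma embeds_below_refl: "embeds_below \<alpha> \<alpha>"
  unfolding embeds_below_def by auto

lemma embeds_below_cons_one:
  assumes I: "embeds_below \<alpha> \<gamma>"
  shows "embeds_below \<alpha> (1 # \<gamma>)"
proof -
  have le: "length \<alpha> \<le> length \<gamma>" using I unfolding embeds_below_def by simp
  then have shift: "\<And>i. (1 # \<gamma>) ! (length (1 # \<gamma>) - length \<alpha> + i) = \<gamma> ! (length \<gamma> - length \<alpha> + i)"
    by (simp add: Suc_diff_le)
  have "\<And>r. r < length (1 # \<gamma>) - length \<alpha> \<Longrightarrow> 1 \<le> (1 # \<gamma>) ! r"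
    using I le unfolding embeds_below_def by (auto simp: nth_Cons split: nat.split)
  then show ?thesis using I le unfolding embeds_below_def shift by simp
qed

(* Lengthening the leftmost part of its size cannot make a row overtake an earlier row
   of the same length. *)
lemma embeds_below_grow_leftmost:
  assumes I: "embeds_below \<alpha> \<gamma>" and k: "k < length \<gamma>" and left: "\<forall>i<k. \<gamma> ! i \<noteq> \<gamma> ! k"
  shows "embeds_below \<alpha> (\<gamma>[k := \<gamma> ! k + 1])"
proof -
  let ?\<delta> = "\<gamma>[k := \<gamma> ! k + 1]"
  define m where "m = length \<gamma> - length \<alpha>"
  have le: "length \<alpha> \<le> length \<gamma>" using I unfolding embeds_below_def by simp
  have grown: "\<And>x. x < length \<gamma> \<Longrightarrow> ?\<delta> ! x = \<gamma> ! x + (if x = k then 1 else 0)"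
    using k by (auto simp: nth_list_update)
  have mono: "\<gamma> ! (m + i) \<le> \<gamma> ! (m + i')" if "i' < i" "i < length \<alpha>" "\<alpha> ! i \<le> \<alpha> ! i'" for i i'
    using I that unfolding embeds_below_def m_def by blast
  show ?thesis unfolding embeds_below_def length_list_update m_def[symmetric]
  proof (intro conjI allI impI)
    fix i assume i: "i < length \<alpha>"
    then have "\<alpha> ! i \<le> \<gamma> ! (m + i)" using I unfolding embeds_below_def m_def by blast
    then show "\<alpha> ! i \<le> ?\<delta> ! (m + i)" using grown[of "m + i"] i le unfolding m_def by auto
  next
    fix r assume r: "r < m"
    then have "1 \<le> \<gamma> ! r" using I unfolding embeds_below_def m_def by blast
    then show "1 \<le> ?\<delta> ! r" using grown[of r] r le unfolding m_def by auto
  next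
    fix i' i assume a: "i' < i" "i < length \<alpha>" "\<alpha> ! i \<le> \<alpha> ! i'"
    have b: "m + i < length \<gamma>" "m + i' < length \<gamma>" using a le unfolding m_def by auto
    have "m + i = k \<Longrightarrow> \<gamma> ! (m + i') \<noteq> \<gamma> ! (m + i)" using left a by auto
    then show "?\<delta> ! (m + i) \<le> ?\<delta> ! (m + i')"
      using mono[OF a] grown[OF b(1)] grown[OF b(2)] by auto
  qed (use le in simp)
qed

lemma clt_embeds_below: "clt \<alpha> \<beta> \<Longrightarrow> embeds_below \<alpha> \<beta>"
proof -
  have step: "embeds_below \<alpha> \<gamma> \<Longrightarrow> ccover \<gamma> \<delta> \<Longrightarrow> embeds_below \<alpha> \<delta>" for \<gamma> \<delta>
    unfolding ccover_def using embeds_below_cons_one embeds_below_grow_leftmost by blast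
  assume "clt \<alpha> \<beta>"
  then show ?thesis unfolding clt_def
    by (induction rule: tranclp_induct) (use step embeds_below_refl in blast)+
qed

definition inner_rows :: "comp \<Rightarrow> comp \<Rightarrow> nat list" where
  "inner_rows \<alpha> \<beta> = replicate (length \<beta> - length \<alpha>) 0 @ \<alpha>"

lemma skew_rows:
  assumes "embeds_below \<alpha> \<beta>"
  shows "skew \<beta> \<alpha> = {(i, j). 1 \<le> i \<and> i \<le> length \<beta> \<and> inner_rows \<alpha> \<beta> ! (i - 1) < j \<and> j \<le> \<beta> ! (i - 1)}"
proof -
  define m where "m = length \<beta> - length \<alpha>"
  have le: "length \<alpha> \<le> length \<beta>" using assms unfolding embeds_below_def by simp
  have inner: "inner_shape \<alpha> \<beta> = {(i, j). m < i \<and> i \<le> length \<beta> \<and> 1 \<le> j \<and> j \<le> \<alpha> ! (i - m - 1)}"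
    unfolding inner_shape_def m_def[symmetric]
  proof (intro set_eqI iffI)
    fix x assume "x \<in> {(i, j). m < i \<and> i \<le> length \<beta> \<and> 1 \<le> j \<and> j \<le> \<alpha> ! (i - m - 1)}"
    then obtain i j where "x = (i, j)" "m < i" "i \<le> length \<beta>" "1 \<le> j" "j \<le> \<alpha> ! (i - m - 1)" by auto
    then show "x \<in> {(m + i, j) |i j. 1 \<le> i \<and> i \<le> length \<alpha> \<and> 1 \<le> j \<and> j \<le> \<alpha> ! (i - 1)}"
      using le unfolding m_def by (intro CollectI exI[of _ "i - m"] exI[of _ j]) (auto simp: m_def)
  qed (use le m_def in auto)
  have "inner_rows \<alpha> \<beta> ! r = (if r < m then 0 else \<alpha> ! (r - m))" for r
    unfolding inner_rows_def m_def by (simp add: nth_append)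
  then show ?thesis unfolding skew_def diagram_def inner by (auto simp: not_less diff_diff_left split: if_splits)
qed

lemma inner_rows_le:
  assumes I: "embeds_below \<alpha> \<beta>" and r: "r < length \<beta>"
  shows "inner_rows \<alpha> \<beta> ! r \<le> \<beta> ! r"
proof (cases "r < length \<beta> - length \<alpha>")
  case False
  define i where "i = r - (length \<beta> - length \<alpha>)"
  have "i < length \<alpha>" "r = length \<beta> - length \<alpha> + i" using False r I unfolding i_def embeds_below_def by auto
  then have "\<alpha> ! i \<le> \<beta> ! r" using I unfolding embeds_below_def by auto
  then show ?thesis using False unfolding inner_rows_def i_def by (simp add: nth_append)
qed (simp add: inner_rows_def nth_append)

lemma card_skew:
  assumes I: "embeds_below \<alpha> \<beta>"
  shows "card (skew \<beta> \<alpha>) = sum_list \<beta> - sum_list \<alpha>"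
proof -
  let ?x = "inner_rows \<alpha> \<beta>"
  let ?A = "SIGMA r:{..<length \<beta>}. {?x ! r<..\<beta> ! r}"
  have "skew \<beta> \<alpha> = (\<lambda>(r, j). (Suc r, j)) ` ?A"
    unfolding skew_rows[OF I]
  proof (intro set_eqI iffI)
    fix x assume "x \<in> {(i, j). 1 \<le> i \<and> i \<le> length \<beta> \<and> ?x ! (i - 1) < j \<and> j \<le> \<beta> ! (i - 1)}"
    then obtain i j where "x = (i, j)" "1 \<le> i" "i \<le> length \<beta>" "?x ! (i - 1) < j" "j \<le> \<beta> ! (i - 1)"
      by auto
    then show "x \<in> (\<lambda>(r, j). (Suc r, j)) ` ?A" by (intro image_eqI[of _ _ "(i - 1, j)"]) auto
  qed auto
  moreover have "inj_on (\<lambda>(r, j). (Suc r, j)) ?A" by (auto simp: inj_on_def)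
  ultimately have "card (skew \<beta> \<alpha>) = (\<Sum>r<length \<beta>. \<beta> ! r - ?x ! r)"
    by (simp add: card_image)
  also have "\<dots> = (\<Sum>r<length \<beta>. \<beta> ! r) - (\<Sum>r<length \<beta>. ?x ! r)"
    by (rule sum_subtractf_nat) (use inner_rows_le[OF I] in auto)
  also have "(\<Sum>r<length \<beta>. \<beta> ! r) = sum_list \<beta>" by (simp add: sum_list_sum_nth atLeast0LessThan)
  also have "(\<Sum>r<length \<beta>. ?x ! r) = sum_list ?x"
  proof -
    have "length ?x = length \<beta>" using I unfolding embeds_below_def inner_rows_def by simp
    then show ?thesis by (metis sum_list_sum_nth atLeast0LessThan)
  qed
  also have "sum_list ?x = sum_list \<alpha>" unfolding inner_rows_def by simp
  finally show ?thesis .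
qed

section \<open>Analysis of an nc border strip\<close>

lemma supp_eq: "supp T = {j. \<exists>i. (i, j) \<in> T}"
  unfolding supp_def by force

locale nc_strip =
  fixes \<alpha> \<beta> :: comp
  assumes comp: "is_comp \<alpha>"
    and embeds: "embeds_below \<alpha> \<beta>"
    and strip: "nc_border_strip (skew \<beta> \<alpha>)"
    and nonempty: "skew \<beta> \<alpha> \<noteq> {}"
begin

definition new_rows :: nat where
  "new_rows = length \<beta> - length \<alpha>"

definition pad :: comp where
  "pad = replicate new_rows 1 @ \<alpha>"

(* the number of top rows of beta produced by the last letters 1 of the word: all new
   rows, except the lowest one if it is longer than a single box *)
definition lead :: nat where
  "lead = (if 1 \<le> new_rows \<and> 2 \<le> \<beta> ! (new_rows - 1) then new_rows - 1 else new_rows)"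

definition a0 :: comp where
  "a0 = drop lead pad"

definition b0 :: comp where
  "b0 = drop lead \<beta>"

lemma length_beta: "length \<beta> = new_rows + length \<alpha>"
  using embeds unfolding embeds_below_def new_rows_def by simp

lemma alpha_pos: "i < length \<alpha> \<Longrightarrow> 1 \<le> \<alpha> ! i"
  using comp nth_mem unfolding is_comp_def by (fastforce simp: Suc_le_eq)

lemma pad_nth: "pad ! r = (if r < new_rows then 1 else \<alpha> ! (r - new_rows))"
  unfolding pad_def by (simp add: nth_append)

lemma inner_rows_nth: "inner_rows \<alpha> \<beta> ! r = (if r < new_rows then 0 else \<alpha> ! (r - new_rows))"
  unfolding inner_rows_def new_rows_def by (simp add: nth_append)

lemma pad_pos: "r < length \<beta> \<Longrightarrow> 1 \<le> pad ! r"
  using alpha_pos length_beta by (simp add: pad_nth)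

lemma new_row_pos: "r < new_rows \<Longrightarrow> 1 \<le> \<beta> ! r"
  using embeds unfolding embeds_below_def new_rows_def by blast

lemma alpha_le_beta: "i < length \<alpha> \<Longrightarrow> \<alpha> ! i \<le> \<beta> ! (new_rows + i)"
  using embeds unfolding embeds_below_def new_rows_def by blast

lemma pad_le:
  assumes "r < length \<beta>"
  shows "pad ! r \<le> \<beta> ! r"
proof (cases "r < new_rows")
  case False
  then have "\<alpha> ! (r - new_rows) \<le> \<beta> ! (new_rows + (r - new_rows))"
    using alpha_le_beta[of "r - new_rows"] assms length_beta by simp
  then show ?thesis using False by (simp add: pad_nth)
qed (use new_row_pos in \<open>simp add: pad_nth\<close>)

lemma beta_mono:
  assumes "new_rows \<le> p'" "p' < p" "p < length \<beta>" "pad ! p \<le> pad ! p'"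
  shows "\<beta> ! p \<le> \<beta> ! p'"
proof -
  have mono: "\<forall>i' i. i' < i \<longrightarrow> i < length \<alpha> \<longrightarrow> \<alpha> ! i \<le> \<alpha> ! i' \<longrightarrow>
      \<beta> ! (new_rows + i) \<le> \<beta> ! (new_rows + i')"
    using embeds unfolding embeds_below_def new_rows_def by blast
  have "\<alpha> ! (p - new_rows) \<le> \<alpha> ! (p' - new_rows)" using assms by (simp add: pad_nth)
  then have "\<beta> ! (new_rows + (p - new_rows)) \<le> \<beta> ! (new_rows + (p' - new_rows))"
    using mono[rule_format, of "p' - new_rows" "p - new_rows"] assms length_beta by simp
  then show ?thesis using assms by simp
qed

lemma skew_mem:
  "(i, j) \<in> skew \<beta> \<alpha> \<longleftrightarrow> 1 \<le> i \<and> i \<le> length \<beta> \<and> inner_rows \<alpha> \<beta> ! (i - 1) < j \<and> j \<le> \<beta> ! (i - 1)"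
  using skew_rows[OF embeds] by simp

lemma skew_mem_high:
  assumes "2 \<le> j" "r < length \<beta>"
  shows "(Suc r, j) \<in> skew \<beta> \<alpha> \<longleftrightarrow> pad ! r < j \<and> j \<le> \<beta> ! r"
  using assms by (auto simp: skew_mem inner_rows_nth pad_nth)

lemma column_1: "(i, 1) \<in> skew \<beta> \<alpha> \<longleftrightarrow> 1 \<le> i \<and> i \<le> new_rows"
proof
  assume "(i, 1) \<in> skew \<beta> \<alpha>"
  then have i: "1 \<le> i" "i \<le> length \<beta>" "inner_rows \<alpha> \<beta> ! (i - 1) < 1" by (auto simp: skew_mem)
  show "1 \<le> i \<and> i \<le> new_rows"
  proof (rule ccontr)
    assume "\<not> (1 \<le> i \<and> i \<le> new_rows)"
    then have "i - 1 - new_rows < length \<alpha>" "\<not> i - 1 < new_rows" using i length_beta by auto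
    then have "1 \<le> inner_rows \<alpha> \<beta> ! (i - 1)" using alpha_pos by (simp add: inner_rows_nth)
    then show False using i by simp
  qed
next
  assume "1 \<le> i \<and> i \<le> new_rows"
  then have "i - 1 < new_rows" "i \<le> length \<beta>" using length_beta by auto
  then show "(i, 1) \<in> skew \<beta> \<alpha>"
    using new_row_pos[of "i - 1"] \<open>1 \<le> i \<and> i \<le> new_rows\<close> by (simp add: skew_mem inner_rows_nth)
qed

lemma strip_conditions:
  "interval_shape (skew \<beta> \<alpha>)"
  "\<And>i. (i, 1) \<in> skew \<beta> \<alpha> \<Longrightarrow> (i, 2) \<in> skew \<beta> \<alpha> \<Longrightarrow> i = Max {r. (r, 1) \<in> skew \<beta> \<alpha>}"
  "\<And>i j. 2 \<le> j \<Longrightarrow> (i, j) \<in> skew \<beta> \<alpha> \<Longrightarrow> (i, j + 1) \<in> skew \<beta> \<alpha> \<Longrightarrow>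
     i = Min {r. (r, j) \<in> skew \<beta> \<alpha>}"
  using strip unfolding nc_border_strip_def by blast+

lemma single_box_rows:
  assumes r: "r + 1 < new_rows"
  shows "\<beta> ! r = 1"
proof (rule ccontr)
  assume "\<beta> ! r \<noteq> 1"
  then have long: "2 \<le> \<beta> ! r" using new_row_pos[of r] r by simp
  have "r < length \<beta>" "r < new_rows" using r length_beta by auto
  then have "(Suc r, 1) \<in> skew \<beta> \<alpha>" "(Suc r, 2) \<in> skew \<beta> \<alpha>"
    using long by (simp_all add: skew_mem inner_rows_nth)
  then have "Suc r = Max {i. (i, 1) \<in> skew \<beta> \<alpha>}" by (rule strip_conditions(2))
  also have "{i. (i, 1) \<in> skew \<beta> \<alpha>} = {1..new_rows}"
    by (rule set_eqI) (simp only: mem_Collect_eq atLeastAtMost_iff column_1)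
  also have "Max {1..new_rows} = new_rows" using r by (intro Max_eqI) auto
  finally show False using r by simp
qed

lemma topmost_in_column:
  assumes "2 \<le> j" "(i, j) \<in> skew \<beta> \<alpha>" "(i, j + 1) \<in> skew \<beta> \<alpha>" "(i', j) \<in> skew \<beta> \<alpha>"
  shows "i \<le> i'"
proof -
  have "i = Min {r. (r, j) \<in> skew \<beta> \<alpha>}" using strip_conditions(3) assms by blast
  moreover have "finite {r. (r, j) \<in> skew \<beta> \<alpha>}"
    by (rule finite_subset[of _ "{1..length \<beta>}"]) (auto simp: skew_mem)
  ultimately show ?thesis using assms(4) by simp
qed

lemma lead_le: "lead \<le> new_rows" "new_rows - lead \<le> 1"
  unfolding lead_def by auto

lemma beta_split: "\<beta> = replicate lead 1 @ b0"
proof -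
  have "\<beta> ! r = 1" if "r < lead" for r
  proof (cases "r + 1 < new_rows")
    case False
    then have r: "r = new_rows - 1" "1 \<le> new_rows" using that lead_le by auto
    then have "lead = new_rows" using that unfolding lead_def by (auto split: if_splits)
    then have "\<not> 2 \<le> \<beta> ! r" using r unfolding lead_def by (auto split: if_splits)
    then show ?thesis using new_row_pos[of r] r by simp
  qed (rule single_box_rows)
  then have "take lead \<beta> = replicate lead 1"
    using length_beta lead_le by (intro nth_equalityI) auto
  then show ?thesis unfolding b0_def by (metis append_take_drop_id)
qed

lemma a0_eq: "a0 = replicate (new_rows - lead) 1 @ \<alpha>"
  unfolding a0_def pad_def using lead_le by simp

lemma length_a0: "length a0 = length \<beta> - lead" and length_b0: "length b0 = length a0"
  unfolding a0_def b0_def pad_def using length_beta by simp_all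

lemma a0_nth: "a0 ! r = pad ! (lead + r)"
  unfolding a0_def by (rule nth_drop) (use lead_le in \<open>simp add: pad_def\<close>)

lemma b0_nth: "r < length a0 \<Longrightarrow> b0 ! r = \<beta> ! (lead + r)"
  unfolding b0_def using length_a0 by simp

lemma row_in_beta: "r < length a0 \<Longrightarrow> lead + r < length \<beta>"
  using length_a0 by simp

lemma supp_high:
  assumes "2 \<le> j"
  shows "j \<in> supp (skew \<beta> \<alpha>) \<longleftrightarrow> (\<exists>r<length a0. a0 ! r < j \<and> j \<le> b0 ! r)"
proof
  assume "j \<in> supp (skew \<beta> \<alpha>)"
  then obtain i where i: "(i, j) \<in> skew \<beta> \<alpha>" unfolding supp_eq by blast
  define p where "p = i - 1"
  have p: "i = Suc p" "p < length \<beta>" using i unfolding p_def by (auto simp: skew_mem)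
  then have box: "pad ! p < j" "j \<le> \<beta> ! p" using skew_mem_high[OF assms] i by auto
  have "\<not> p < lead"
  proof
    assume "p < lead"
    then have "\<beta> ! p = 1" by (subst beta_split) (simp add: nth_append)
    then show False using box assms by simp
  qed
  then show "\<exists>r<length a0. a0 ! r < j \<and> j \<le> b0 ! r"
    using box p length_a0 a0_nth b0_nth
    by (intro exI[of _ "p - lead"]) auto
next
  assume "\<exists>r<length a0. a0 ! r < j \<and> j \<le> b0 ! r"
  then obtain r where "r < length a0" "a0 ! r < j" "j \<le> b0 ! r" by blast
  then have "(Suc (lead + r), j) \<in> skew \<beta> \<alpha>"
    using skew_mem_high[OF assms row_in_beta] a0_nth b0_nth by simp
  then show "j \<in> supp (skew \<beta> \<alpha>)" unfolding supp_eq by blast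
qed

lemma supp_pos: "j \<in> supp (skew \<beta> \<alpha>) \<Longrightarrow> 1 \<le> j"
  unfolding supp_eq by (auto simp: skew_mem)

lemma one_in_supp: "1 \<in> supp (skew \<beta> \<alpha>) \<longleftrightarrow> 1 \<le> new_rows"
  unfolding supp_eq mem_Collect_eq column_1 by auto

lemma finite_strip: "finite (skew \<beta> \<alpha>)"
proof -
  have "skew \<beta> \<alpha> \<subseteq> (SIGMA i:{1..length \<beta>}. {..\<beta> ! (i - 1)})" by (auto simp: skew_mem)
  then show ?thesis by (rule finite_subset) auto
qed

lemma connected_if_supp:
  assumes "set w = supp (skew \<beta> \<alpha>)"
  shows "connected_word w"
proof -
  let ?X = "supp (skew \<beta> \<alpha>)"
  have fin: "finite ?X" and ne: "?X \<noteq> {}" using finite_strip nonempty unfolding supp_def by auto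
  have interval: "y \<in> ?X" if "x \<in> ?X" "z \<in> ?X" "x \<le> y" "y \<le> z" for x y z
    using strip_conditions(1) that unfolding interval_shape_def by blast
  have "?X = {Min ?X..Max ?X}"
  proof (intro set_eqI iffI)
    fix y assume "y \<in> {Min ?X..Max ?X}"
    then show "y \<in> ?X" using interval[of "Min ?X" "Max ?X" y] Min_in[OF fin ne] Max_in[OF fin ne] by simp
  qed (use fin in simp)
  then show ?thesis using assms unfolding connected_word_def by blast
qed

lemma strip_core_if_growth:
  assumes "\<exists>r<length a0. a0 ! r < b0 ! r"
  shows "strip_core a0 b0"
proof
  show "length b0 = length a0" by (rule length_b0)
  show "\<And>r. r < length a0 \<Longrightarrow> 1 \<le> a0 ! r" using a0_nth pad_pos row_in_beta by simp
  show "\<And>r. r < length a0 \<Longrightarrow> a0 ! r \<le> b0 ! r" using a0_nth b0_nth pad_le row_in_beta by simp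
  show "\<exists>r<length a0. a0 ! r < b0 ! r" by (rule assms)
next
  fix r j r' assume r: "r < length a0" "a0 ! r < j" "j + 1 \<le> b0 ! r" "r' < r"
  show "\<not> (a0 ! r' < j \<and> j \<le> b0 ! r')"
  proof
    assume r': "a0 ! r' < j \<and> j \<le> b0 ! r'"
    have j: "2 \<le> j" using pad_pos[OF row_in_beta[OF r(1)]] a0_nth r by simp
    have rows: "lead + r < length \<beta>" "lead + r' < length \<beta>" using r row_in_beta by auto
    have "(Suc (lead + r), j) \<in> skew \<beta> \<alpha>" "(Suc (lead + r), j + 1) \<in> skew \<beta> \<alpha>"
      using skew_mem_high[OF j rows(1)] skew_mem_high[of "j + 1", OF _ rows(1)] j r a0_nth b0_nth
      by auto
    moreover have "(Suc (lead + r'), j) \<in> skew \<beta> \<alpha>"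
      using skew_mem_high[OF j rows(2)] r' a0_nth b0_nth r by simp
    ultimately have "Suc (lead + r) \<le> Suc (lead + r')" using topmost_in_column j by blast
    then show False using r by simp
  qed
next
  fix r r' assume r: "r < length a0" "r' < r" "a0 ! r' = b0 ! r'" "a0 ! r \<le> a0 ! r'"
  have "new_rows \<le> lead + r'"
  proof (rule ccontr)
    assume "\<not> new_rows \<le> lead + r'"
    then have "lead + r' = new_rows - 1" "2 \<le> \<beta> ! (new_rows - 1)"
      using lead_le unfolding lead_def by (auto split: if_splits)
    then show False
      using r(3) a0_nth[of r'] b0_nth[of r'] r(1,2) \<open>\<not> new_rows \<le> lead + r'\<close> by (simp add: pad_nth)
  qed
  then show "b0 ! r \<le> b0 ! r'" using beta_mono[of "lead + r'" "lead + r"] r row_in_beta a0_nth b0_nth by simp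
qed


lemma card_strip: "card (skew \<beta> \<alpha>) = sum_list \<beta> - sum_list \<alpha>"
  by (rule card_skew[OF embeds])

(* If some row grows, the word consists of the letters 1 for the single-box rows
   around the core word. *)
lemma word_if_growth:
  assumes growth: "\<exists>r<length a0. a0 ! r < b0 ! r"
  shows "\<exists>w \<in> CRHW (card (skew \<beta> \<alpha>)). word_act w \<alpha> = Some \<beta>"
proof -
  interpret core: strip_core a0 b0 by (rule strip_core_if_growth[OF growth])
  define w where
    "w = replicate lead 1 @ rev core.down_word @ rev core.up_word @ replicate (new_rows - lead) 1"
  have "run (rev w) \<alpha> =
      run (replicate (new_rows - lead) 1 @ (core.up_word @ core.down_word) @ replicate lead 1) \<alpha>"
    unfolding w_def by simp
  also have "\<dots> = Option.bind (run (replicate (new_rows - lead) 1) \<alpha>)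
      (run ((core.up_word @ core.down_word) @ replicate lead 1))"
    by (rule run_append)
  also have "\<dots> = run ((core.up_word @ core.down_word) @ replicate lead 1) a0"
    by (simp only: run_ones a0_eq[symmetric]) simp
  also have "\<dots> = run (replicate lead 1) b0"
    by (simp only: run_append[of "core.up_word @ core.down_word"] core.run_core) simp
  also have "\<dots> = Some \<beta>" using run_ones beta_split by simp
  finally have run_w: "run (rev w) \<alpha> = Some \<beta>" .
  have letters: "x \<in> set w \<longleftrightarrow>
      (x = 1 \<and> 1 \<le> new_rows) \<or> x \<in> set (core.up_word @ core.down_word)" for x
    using lead_le unfolding w_def by auto
  have "set w = supp (skew \<beta> \<alpha>)"
  proof (rule set_eqI)
    fix j :: nat
    consider "j = 0" | "j = 1" | "2 \<le> j" by linarith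
    then show "j \<in> set w \<longleftrightarrow> j \<in> supp (skew \<beta> \<alpha>)"
    proof cases
      case 1 then show ?thesis using letters supp_pos core.core_letters_bounds by fastforce
    next
      case 2 then show ?thesis using letters one_in_supp core.core_letters_bounds by fastforce
    next
      case 3 then show ?thesis using letters supp_high core.set_core_word by auto
    qed
  qed
  moreover have "length w = card (skew \<beta> \<alpha>)" using run_size[OF run_w] card_strip by simp
  moreover have "\<forall>i\<in>set w. 1 \<le> i" using letters core.core_letters_bounds by fastforce
  moreover have "reverse_hookword w" unfolding w_def by (rule core.core_reverse_hookword[OF lead_le(2)])
  ultimately have "w \<in> CRHW (card (skew \<beta> \<alpha>))" unfolding CRHW_def using connected_if_supp by blast
  then show ?thesis using run_w word_act_run by auto
qed

(* If no row grows, beta is alpha with single-box rows on top, produced by letters 1. *)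
lemma word_if_no_growth:
  assumes static: "\<not> (\<exists>r<length a0. a0 ! r < b0 ! r)"
  shows "\<exists>w \<in> CRHW (card (skew \<beta> \<alpha>)). word_act w \<alpha> = Some \<beta>"
proof -
  have same: "a0 = b0"
  proof (rule nth_equalityI)
    fix r assume "r < length a0"
    then show "a0 ! r = b0 ! r" using static pad_le[OF row_in_beta] a0_nth b0_nth
      by (metis le_neq_implies_less)
  qed (simp add: length_b0)
  have "lead = new_rows"
  proof (rule ccontr)
    assume "lead \<noteq> new_rows"
    then have "lead = new_rows - 1" "1 \<le> new_rows" "2 \<le> \<beta> ! (new_rows - 1)"
      unfolding lead_def by (auto split: if_splits)
    moreover have "0 < length a0" using length_a0 length_beta calculation by simp
    ultimately show False using same a0_nth[of 0] b0_nth[of 0] by (simp add: pad_nth)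
  qed
  then have beta: "\<beta> = replicate new_rows 1 @ \<alpha>" using beta_split same a0_eq by simp
  have "sum_list (replicate new_rows 1 @ \<alpha>) = new_rows + sum_list \<alpha>" by (simp add: sum_list_replicate)
  then have "sum_list \<beta> = new_rows + sum_list \<alpha>" using beta by metis
  then have card: "card (skew \<beta> \<alpha>) = new_rows" using card_strip by simp
  moreover have "0 < card (skew \<beta> \<alpha>)" using finite_strip nonempty by (simp add: card_gt_0_iff)
  ultimately have "1 \<le> new_rows" by simp
  define w where "w = replicate new_rows (1::nat)"
  have "w = replicate (new_rows - 1) 1 @ [1]"
    unfolding w_def using \<open>1 \<le> new_rows\<close> by (metis Suc_diff_1 less_le_trans zero_less_one replicate_Suc replicate_append_same)
  then have "reverse_hookword w" by (simp add: reverse_hookword_append)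
  moreover have "set w = {1..1}" unfolding w_def using \<open>1 \<le> new_rows\<close> by auto
  then have "connected_word w" unfolding connected_word_def by blast
  ultimately have "w \<in> CRHW (card (skew \<beta> \<alpha>))" unfolding CRHW_def w_def using card by simp
  moreover have "word_act w \<alpha> = Some \<beta>" unfolding word_act_run w_def using run_ones beta by simp
  ultimately show ?thesis by blast
qed

theorem exists_word: "\<exists>w \<in> CRHW (card (skew \<beta> \<alpha>)). word_act w \<alpha> = Some \<beta>"
  using word_if_growth word_if_no_growth by blast

end

theorem mainTheorem6:
  fixes \<alpha> \<beta> :: comp and n :: nat
  assumes "is_comp \<alpha>" and "1 \<le> n"
    and "clt \<alpha> \<beta>"
    and "nc_border_strip (skew \<beta> \<alpha>)"
    and "card (skew \<beta> \<alpha>) = n"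
  shows "\<exists>w \<in> CRHW n. word_act w \<alpha> = Some \<beta>"
proof -
  have "skew \<beta> \<alpha> \<noteq> {}" using assms(2,5) by auto
  then interpret nc_strip \<alpha> \<beta>
    using assms(1,4) clt_embeds_below[OF assms(3)] by unfold_locales
  show ?thesis using exists_word assms(5) by simp
qed

end
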